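(* Let $T_{\mathrm{Prog}}=(V,\mathit{Init},\mathit{TR})$ with $V=\{pc,x,z_1,z_2,y_1,y_2\}$ be the transition system defined as follows (locations are encoded as integers $\mathrm{start}=0$, $\mathrm{loop}_1=1$, $\mathrm{loop}_2=2$, $\mathrm{end}=3$): $\mathit{Init} := pc=\mathrm{start}\wedge x>0\wedge z_1=x\wedge z_2=2x\wedge y_1=0\wedge y_2=0$, and $\mathit{TR}$ is the disjunction of the following cases, where in each case every variable not mentioned keeps its value ($v'=v$): (1) $pc\in\{\mathrm{start},\mathrm{loop}_1\}\wedge z_1>0\wedge pc'=\mathrm{loop}_1\wedge z_1'=z_1-1\wedge y_1'=y_1+x$; (2) $pc\in\{\mathrm{start},\mathrm{loop}_1\}\wedge z_1\le 0\wedge pc'=\mathrm{loop}_2$; (3) $pc=\mathrm{loop}_2\wedge z_2>0\wedge pc'=\mathrm{loop}_2\wedge z_2'=z_2-1\wedge y_2'=y_2+x$; (4) $pc=\mathrm{loop}_2\wedge z_2\le 0\wedge pc'=\mathrm{end}$; (5) $pc=\mathrm{end}\wedge pc'=\mathrm{end}$. (This encodes the program which, on input $x>0$, computes $y_1=x^2$ by adding $x$ to $y_1$ exactly $x$ times, then computes $y_2=2x^2$ by adding $x$ to $y_2$ exactly $2x$ times, and then asserts $y_2=2y_1$.) Let $P := (pc=\mathrm{end})\to(y_2=2y_1)$. Then $T_{\mathrm{Prog}}\models P$, but there is no inductive invariant for $T_{\mathrm{Prog}}$ and $P$ that is a QFLIA formula over $V$.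
   Context: QFLIA (quantifier-free linear integer arithmetic) formulas are built from integer-valued variables, integer constants, addition, multiplication by integer constants, the relations $=,<,\le$, and Boolean connectives, with no quantifiers; all variables range over $\mathbb{Z}$. A transition system is a tuple $T=(V,\mathit{Init},\mathit{TR})$ where $V$ is a finite set of integer variables, $\mathit{Init}$ is a QFLIA formula over $V$, and $\mathit{TR}$ is a QFLIA formula over $V\uplus V'$, where $V'=\{v' : v\in V\}$ is a primed copy of $V$. A state is an assignment $V\to\mathbb{Z}$. The initial states are those satisfying $\mathit{Init}$. A pair of states $(s,t)$ is a transition if $\mathit{TR}$ holds when unprimed variables take their values from $s$ and primed variables from $t$. Reachable states are those reachable from an initial state by finitely many transitions. A safety property is a QFLIA formula $P$ over $V$. We write $T\models P$ if every reachable state satisfies $P$. An inductive invariant for $T$ and $P$ is a formula $I$ over $V$ such that: (i) $\mathit{Init}\to I$ is valid; (ii) $I\wedge \mathit{TR}\to I'$ is valid, where $I'$ is obtained from $I$ by replacing each $v\in V$ with $v'$; and (iii) $I\to P$ is valid. *)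

theory Defs
  imports Main
begin

datatype 'v lterm =
    LVar 'v
  | LConst int
  | LAdd "'v lterm" "'v lterm"
  | LCMul int "'v lterm"

datatype 'v qflia =
    FTrue
  | FFalse
  | FEq "'v lterm" "'v lterm"
  | FLt "'v lterm" "'v lterm"
  | FLe "'v lterm" "'v lterm"
  | FNot "'v qflia"
  | FAnd "'v qflia" "'v qflia"
  | FOr "'v qflia" "'v qflia"
  | FImp "'v qflia" "'v qflia"

fun lterm_val :: "('v \<Rightarrow> int) \<Rightarrow> 'v lterm \<Rightarrow> int" where
  "lterm_val s (LVar v) = s v"
| "lterm_val s (LConst c) = c"
| "lterm_val s (LAdd a b) = lterm_val s a + lterm_val s b"
| "lterm_val s (LCMul c a) = c * lterm_val s a"

fun holds :: "('v \<Rightarrow> int) \<Rightarrow> 'v qflia \<Rightarrow> bool" where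
  "holds s FTrue = True"
| "holds s FFalse = False"
| "holds s (FEq a b) = (lterm_val s a = lterm_val s b)"
| "holds s (FLt a b) = (lterm_val s a < lterm_val s b)"
| "holds s (FLe a b) = (lterm_val s a \<le> lterm_val s b)"
| "holds s (FNot f) = (\<not> holds s f)"
| "holds s (FAnd f g) = (holds s f \<and> holds s g)"
| "holds s (FOr f g) = (holds s f \<or> holds s g)"
| "holds s (FImp f g) = (holds s f \<longrightarrow> holds s g)"

text \<open>The variable set V = {pc, x, z1, z2, y1, y2}; a state is an assignment V \<Rightarrow> int.
  Locations: start = 0, loop1 = 1, loop2 = 2, end = 3.\<close>
datatype var = PC | X | Z1 | Z2 | Y1 | Y2

type_synonym state = "var \<Rightarrow> int"

definition Init_Prog :: "state \<Rightarrow> bool" where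
  "Init_Prog s \<longleftrightarrow> s PC = 0 \<and> s X > 0 \<and> s Z1 = s X \<and> s Z2 = 2 * s X
                  \<and> s Y1 = 0 \<and> s Y2 = 0"

definition TR_Prog :: "state \<Rightarrow> state \<Rightarrow> bool" where
  "TR_Prog s t \<longleftrightarrow>
     ((s PC = 0 \<or> s PC = 1) \<and> s Z1 > 0 \<and> t PC = 1 \<and> t Z1 = s Z1 - 1 \<and> t Y1 = s Y1 + s X
        \<and> t X = s X \<and> t Z2 = s Z2 \<and> t Y2 = s Y2)
   \<or> ((s PC = 0 \<or> s PC = 1) \<and> s Z1 \<le> 0 \<and> t PC = 2
        \<and> t X = s X \<and> t Z1 = s Z1 \<and> t Z2 = s Z2 \<and> t Y1 = s Y1 \<and> t Y2 = s Y2)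
   \<or> (s PC = 2 \<and> s Z2 > 0 \<and> t PC = 2 \<and> t Z2 = s Z2 - 1 \<and> t Y2 = s Y2 + s X
        \<and> t X = s X \<and> t Z1 = s Z1 \<and> t Y1 = s Y1)
   \<or> (s PC = 2 \<and> s Z2 \<le> 0 \<and> t PC = 3
        \<and> t X = s X \<and> t Z1 = s Z1 \<and> t Z2 = s Z2 \<and> t Y1 = s Y1 \<and> t Y2 = s Y2)
   \<or> (s PC = 3 \<and> t PC = 3
        \<and> t X = s X \<and> t Z1 = s Z1 \<and> t Z2 = s Z2 \<and> t Y1 = s Y1 \<and> t Y2 = s Y2)"

definition P_Prog :: "state \<Rightarrow> bool" where
  "P_Prog s \<longleftrightarrow> (s PC = 3 \<longrightarrow> s Y2 = 2 * s Y1)"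

inductive reachable_Prog :: "state \<Rightarrow> bool" where
  init: "Init_Prog s \<Longrightarrow> reachable_Prog s"
| step: "reachable_Prog s \<Longrightarrow> TR_Prog s t \<Longrightarrow> reachable_Prog t"

definition inductive_invariant_Prog :: "var qflia \<Rightarrow> bool" where
  "inductive_invariant_Prog I \<longleftrightarrow>
     (\<forall>s. Init_Prog s \<longrightarrow> holds s I)
   \<and> (\<forall>s t. holds s I \<and> TR_Prog s t \<longrightarrow> holds t I)
   \<and> (\<forall>s. holds s I \<longrightarrow> P_Prog s)"

end

(* Safety holds because the reachable states satisfy the nonlinear invariant prog_inv.
   For the converse, fix c \<ge> 1 and consider at location loop1 the states with x = a,
   z1 = a - c, z2 = 2a: with y1 = c a such a state is reachable, with y1 = c a + 1 it runs
   into a violation of P. As a grows, both families are rays with the common direction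
   (x, z1, z2, y1) = (1, 1, 2, c), one shifted from the other by the unit vector u of y1.
   Along a ray every linear term is affine in a, so each atom of a QFLIA formula is
   eventually decided by the sign of its slope. Choosing c larger than all slopes of the
   atoms in direction (1, 1, 2, 0) gives every atom that sees the shift u a nonzero slope;
   then for large a no QFLIA formula separates the two rays, so none is an inductive
   invariant. *)

theory Submission
  imports Defs
begin

definition prog_inv :: "state \<Rightarrow> bool" where
  "prog_inv s \<longleftrightarrow> s X > 0 \<and>
     ((s PC \<in> {0, 1} \<and> 0 \<le> s Z1 \<and> s Z1 \<le> s X \<and> s Z2 = 2 * s X
         \<and> s Y1 = s X * (s X - s Z1) \<and> s Y2 = 0)
    \<or> (s PC = 2 \<and> s Y1 = s X * s X \<and> 0 \<le> s Z2 \<and> s Z2 \<le> 2 * s X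
         \<and> s Y2 = s X * (2 * s X - s Z2))
    \<or> (s PC = 3 \<and> s Y1 = s X * s X \<and> s Y2 = 2 * s X * s X))"

lemma prog_inv_step:
  assumes "prog_inv s" and "TR_Prog s t"
  shows "prog_inv t"
  using assms(2) unfolding TR_Prog_def
  by (elim disjE conjE) (use assms(1) in \<open>auto simp: prog_inv_def right_diff_distrib\<close>)

lemma reachable_prog_inv: "reachable_Prog s \<Longrightarrow> prog_inv s"
proof (induction rule: reachable_Prog.induct)
  case (init s)
  then show ?case by (simp add: prog_inv_def Init_Prog_def)
qed (rule prog_inv_step)

lemma reachable_Prog_safe: "reachable_Prog s \<Longrightarrow> P_Prog s"
  using reachable_prog_inv[of s] by (auto simp: prog_inv_def P_Prog_def)

fun lterm_lin :: "('v \<Rightarrow> int) \<Rightarrow> 'v lterm \<Rightarrow> int" where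
  "lterm_lin d (LVar v) = d v"
| "lterm_lin d (LConst c) = 0"
| "lterm_lin d (LAdd a b) = lterm_lin d a + lterm_lin d b"
| "lterm_lin d (LCMul c a) = c * lterm_lin d a"

lemma lterm_val_add: "lterm_val (\<lambda>v. s v + d v) e = lterm_val s e + lterm_lin d e"
  by (induction e) (simp_all add: algebra_simps)

lemma lterm_val_ray: "lterm_val (\<lambda>v. s v + a * d v) e = lterm_val s e + a * lterm_lin d e"
  by (induction e) (simp_all add: algebra_simps)

lemma lterm_lin_add_scaled:
  "lterm_lin (\<lambda>v. d v + k * u v) e = lterm_lin d e + k * lterm_lin u e"
  by (induction e) (simp_all add: algebra_simps)

fun atoms :: "'v qflia \<Rightarrow> ('v lterm \<times> 'v lterm) set" where
  "atoms FTrue = {}"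
| "atoms FFalse = {}"
| "atoms (FEq a b) = {(a, b)}"
| "atoms (FLt a b) = {(a, b)}"
| "atoms (FLe a b) = {(a, b)}"
| "atoms (FNot f) = atoms f"
| "atoms (FAnd f g) = atoms f \<union> atoms g"
| "atoms (FOr f g) = atoms f \<union> atoms g"
| "atoms (FImp f g) = atoms f \<union> atoms g"

lemma finite_atoms: "finite (atoms f)"
  by (induction f) simp_all

lemma sgn_add_small:
  fixes y b :: int
  shows "\<bar>b\<bar> < \<bar>y\<bar> \<Longrightarrow> sgn (y + b) = sgn y"
  by (simp add: sgn_if abs_if split: if_splits)

lemma eventually_sgn_affine_eq:
  fixes A B B' :: int
  assumes "B \<noteq> B' \<longrightarrow> A \<noteq> 0"
  shows "\<forall>\<^sub>F a in at_top. sgn (A * a + B) = sgn (A * a + B')"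
proof (cases "B = B'")
  case False
  with assms have "A \<noteq> 0" by simp
  have "sgn (A * a + B) = sgn (A * a + B')" if a: "a \<ge> \<bar>B\<bar> + \<bar>B'\<bar> + 1" for a
  proof -
    have "1 * a \<le> \<bar>A\<bar> * a"
      using \<open>A \<noteq> 0\<close> a by (intro mult_right_mono) auto
    then have "\<bar>A * a\<bar> > \<bar>B\<bar>" "\<bar>A * a\<bar> > \<bar>B'\<bar>"
      using a by (simp_all add: abs_mult)
    then show ?thesis by (simp add: sgn_add_small)
  qed
  moreover have "\<forall>\<^sub>F a in at_top. a \<ge> \<bar>B\<bar> + \<bar>B'\<bar> + 1" by (rule eventually_ge_at_top)
  ultimately show ?thesis by (elim eventually_mono)
qed simp

lemma int_rel_eq_if_sgn_diff_eq:
  fixes x y x' y' :: int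
  assumes "sgn (x - y) = sgn (x' - y')"
  shows "(x < y \<longleftrightarrow> x' < y') \<and> (x = y \<longleftrightarrow> x' = y') \<and> (x \<le> y \<longleftrightarrow> x' \<le> y')"
  using assms by (simp add: sgn_if split: if_splits)

lemma eventually_atom_shift_sgn_eq:
  assumes "lterm_lin u e1 \<noteq> lterm_lin u e2 \<longrightarrow> lterm_lin d e1 \<noteq> lterm_lin d e2"
  shows "\<forall>\<^sub>F a in at_top.
    sgn (lterm_val (\<lambda>v. (s v + u v) + a * d v) e1 - lterm_val (\<lambda>v. (s v + u v) + a * d v) e2)
    = sgn (lterm_val (\<lambda>v. s v + a * d v) e1 - lterm_val (\<lambda>v. s v + a * d v) e2)"
proof -
  define A where "A = lterm_lin d e1 - lterm_lin d e2"
  define B where "B = lterm_val s e1 - lterm_val s e2"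
  define B' where "B' = B + (lterm_lin u e1 - lterm_lin u e2)"
  have "\<forall>\<^sub>F a in at_top. sgn (A * a + B') = sgn (A * a + B)"
    using assms by (intro eventually_sgn_affine_eq) (auto simp: A_def B'_def)
  then show ?thesis
    unfolding lterm_val_ray unfolding lterm_val_add by (simp add: A_def B_def B'_def algebra_simps)
qed

definition direction_separates :: "'v qflia \<Rightarrow> ('v \<Rightarrow> int) \<Rightarrow> ('v \<Rightarrow> int) \<Rightarrow> bool" where
  "direction_separates f d u \<longleftrightarrow>
     (\<forall>(e1, e2) \<in> atoms f. lterm_lin u e1 \<noteq> lterm_lin u e2 \<longrightarrow> lterm_lin d e1 \<noteq> lterm_lin d e2)"

lemma holds_eq_if_atom_signs_eq:
  assumes "\<forall>(e1, e2) \<in> atoms f.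
    sgn (lterm_val s e1 - lterm_val s e2) = sgn (lterm_val t e1 - lterm_val t e2)"
  shows "holds s f = holds t f"
  using assms by (induction f) (auto dest: int_rel_eq_if_sgn_diff_eq)

lemma eventually_holds_shift_eq:
  assumes "direction_separates f d u"
  shows "\<forall>\<^sub>F a in at_top. holds (\<lambda>v. (s v + u v) + a * d v) f = holds (\<lambda>v. s v + a * d v) f"
proof -
  have "\<forall>\<^sub>F a in at_top. \<forall>(e1, e2) \<in> atoms f.
    sgn (lterm_val (\<lambda>v. (s v + u v) + a * d v) e1 - lterm_val (\<lambda>v. (s v + u v) + a * d v) e2)
    = sgn (lterm_val (\<lambda>v. s v + a * d v) e1 - lterm_val (\<lambda>v. s v + a * d v) e2)"
    using assms unfolding direction_separates_def
    by (intro eventually_ball_finite[OF finite_atoms]) (auto intro: eventually_atom_shift_sgn_eq)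
  then show ?thesis
    by (rule eventually_mono) (rule holds_eq_if_atom_signs_eq)
qed

lemma eventually_lterm_lin_separates:
  "\<forall>\<^sub>F c in at_top. lterm_lin u e1 \<noteq> lterm_lin u e2 \<longrightarrow>
     lterm_lin (\<lambda>v. d v + c * u v) e1 \<noteq> lterm_lin (\<lambda>v. d v + c * u v) e2"
proof -
  define p where "p = lterm_lin d e1 - lterm_lin d e2"
  define r where "r = lterm_lin u e1 - lterm_lin u e2"
  have "c * r + p \<noteq> 0" if c: "c \<ge> \<bar>p\<bar> + 1" and "r \<noteq> 0" for c
  proof -
    have "c * 1 \<le> c * \<bar>r\<bar>"
      using \<open>r \<noteq> 0\<close> c by (intro mult_left_mono) auto
    then have "\<bar>p\<bar> < \<bar>c * r\<bar>" using c by (simp add: abs_mult)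
    then have "sgn (c * r + p) = sgn (c * r)" by (rule sgn_add_small)
    then show ?thesis using \<open>r \<noteq> 0\<close> c by (auto simp: sgn_0_0)
  qed
  moreover have "\<forall>\<^sub>F c in at_top. c \<ge> \<bar>p\<bar> + 1" by (rule eventually_ge_at_top)
  ultimately show ?thesis
    by (elim eventually_mono) (simp add: lterm_lin_add_scaled p_def r_def algebra_simps)
qed

lemma eventually_direction_separates:
  "\<forall>\<^sub>F c in at_top. direction_separates f (\<lambda>v. d v + c * u v) u"
  unfolding direction_separates_def
  by (rule eventually_ball_finite[OF finite_atoms]) (clarify, rule eventually_lterm_lin_separates)

definition prog_state :: "int \<Rightarrow> int \<Rightarrow> int \<Rightarrow> int \<Rightarrow> int \<Rightarrow> int \<Rightarrow> state" where
  "prog_state pc x z1 z2 y1 y2 =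
     (\<lambda>v. case v of PC \<Rightarrow> pc | X \<Rightarrow> x | Z1 \<Rightarrow> z1 | Z2 \<Rightarrow> z2 | Y1 \<Rightarrow> y1 | Y2 \<Rightarrow> y2)"

lemma prog_state_simps [simp]:
  "prog_state pc x z1 z2 y1 y2 PC = pc" "prog_state pc x z1 z2 y1 y2 X = x"
  "prog_state pc x z1 z2 y1 y2 Z1 = z1" "prog_state pc x z1 z2 y1 y2 Z2 = z2"
  "prog_state pc x z1 z2 y1 y2 Y1 = y1" "prog_state pc x z1 z2 y1 y2 Y2 = y2"
  by (simp_all add: prog_state_def)

lemma loop1_run:
  "0 \<le> z \<Longrightarrow> TR_Prog\<^sup>*\<^sup>* (prog_state 1 x (z + int n) z2 y1 y2) (prog_state 1 x z z2 (y1 + int n * x) y2)"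
proof (induction n arbitrary: y1)
  case (Suc n)
  have "TR_Prog (prog_state 1 x (z + int (Suc n)) z2 y1 y2) (prog_state 1 x (z + int n) z2 (y1 + x) y2)"
    using Suc.prems by (simp add: TR_Prog_def)
  with Suc.IH[of "y1 + x"] Suc.prems show ?case
    by (auto intro: converse_rtranclp_into_rtranclp simp: algebra_simps)
qed simp

lemma loop2_run:
  "0 \<le> z \<Longrightarrow> TR_Prog\<^sup>*\<^sup>* (prog_state 2 x z1 (z + int n) y1 y2) (prog_state 2 x z1 z y1 (y2 + int n * x))"
proof (induction n arbitrary: y2)
  case (Suc n)
  have "TR_Prog (prog_state 2 x z1 (z + int (Suc n)) y1 y2) (prog_state 2 x z1 (z + int n) y1 (y2 + x))"
    using Suc.prems by (simp add: TR_Prog_def)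
  with Suc.IH[of "y2 + x"] Suc.prems show ?case
    by (auto intro: converse_rtranclp_into_rtranclp simp: algebra_simps)
qed simp

lemma reachable_Prog_rtranclp: "TR_Prog\<^sup>*\<^sup>* s t \<Longrightarrow> reachable_Prog s \<Longrightarrow> reachable_Prog t"
  by (induction rule: rtranclp_induct) (auto intro: reachable_Prog.step)

lemma reachable_loop1_state:
  assumes "1 \<le> c" "c \<le> a"
  shows "reachable_Prog (prog_state 1 a (a - c) (2 * a) (c * a) 0)"
proof -
  have "reachable_Prog (prog_state 0 a a (2 * a) 0 0)"
    using assms by (intro reachable_Prog.init) (simp add: Init_Prog_def)
  then have "reachable_Prog (prog_state 1 a (a - 1) (2 * a) a 0)"
    by (rule reachable_Prog.step) (use assms in \<open>simp add: TR_Prog_def\<close>)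
  moreover have "TR_Prog\<^sup>*\<^sup>* (prog_state 1 a (a - 1) (2 * a) a 0) (prog_state 1 a (a - c) (2 * a) (c * a) 0)"
    using loop1_run[of "a - c" a "nat (c - 1)" "2 * a" a 0] assms by (simp add: algebra_simps)
  ultimately show ?thesis by (rule reachable_Prog_rtranclp[rotated])
qed


lemma loop1_state_reaches_violation:
  assumes "c \<le> a" "0 < a"
  obtains t where "TR_Prog\<^sup>*\<^sup>* (prog_state 1 a (a - c) (2 * a) (c * a + 1) 0) t" "\<not> P_Prog t"
proof -
  have loop1: "TR_Prog\<^sup>*\<^sup>* (prog_state 1 a (a - c) (2 * a) (c * a + 1) 0) (prog_state 1 a 0 (2 * a) (a * a + 1) 0)"
    using loop1_run[of 0 a "nat (a - c)" "2 * a" "c * a + 1" 0] assms by (simp add: algebra_simps)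
  have exit1: "TR_Prog (prog_state 1 a 0 (2 * a) (a * a + 1) 0) (prog_state 2 a 0 (2 * a) (a * a + 1) 0)"
    by (simp add: TR_Prog_def)
  have loop2: "TR_Prog\<^sup>*\<^sup>* (prog_state 2 a 0 (2 * a) (a * a + 1) 0) (prog_state 2 a 0 0 (a * a + 1) (2 * a * a))"
    using loop2_run[of 0 a 0 "nat (2 * a)" "a * a + 1" 0] assms by (simp add: algebra_simps)
  have exit2: "TR_Prog (prog_state 2 a 0 0 (a * a + 1) (2 * a * a)) (prog_state 3 a 0 0 (a * a + 1) (2 * a * a))"
    by (simp add: TR_Prog_def)
  show ?thesis
  proof (rule that)
    show "TR_Prog\<^sup>*\<^sup>* (prog_state 1 a (a - c) (2 * a) (c * a + 1) 0) (prog_state 3 a 0 0 (a * a + 1) (2 * a * a))"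
      using loop1 exit1 loop2 exit2 by (blast intro: rtranclp_trans rtranclp.rtrancl_into_rtrancl)
    show "\<not> P_Prog (prog_state 3 a 0 0 (a * a + 1) (2 * a * a))"
      by (simp add: P_Prog_def algebra_simps)
  qed
qed

lemma inductive_invariant_rtranclp:
  assumes "inductive_invariant_Prog I" and "TR_Prog\<^sup>*\<^sup>* s t" and "holds s I"
  shows "holds t I"
  using assms(2,3)
  by (induction rule: rtranclp_induct) (use assms(1) in \<open>auto simp: inductive_invariant_Prog_def\<close>)

lemma inductive_invariant_reachable:
  assumes "inductive_invariant_Prog I" and "reachable_Prog s"
  shows "holds s I"
  using assms(2)
  by (induction rule: reachable_Prog.induct) (use assms(1) in \<open>auto simp: inductive_invariant_Prog_def\<close>)

lemma no_inductive_invariant: "\<not> inductive_invariant_Prog I"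
proof
  assume inv: "inductive_invariant_Prog I"
  define d where "d = prog_state 0 1 1 2 0 0"
  define u where "u = prog_state 0 0 0 0 1 0"
  obtain c where "c \<ge> 1" and sep: "direction_separates I (\<lambda>v. d v + c * u v) u"
    using eventually_happens'[OF trivial_limit_at_top_linorder
        eventually_conj[OF eventually_ge_at_top eventually_direction_separates]] by blast
  define s where "s = prog_state 1 0 (- c) 0 0 0"
  obtain a where "a \<ge> c" and same:
      "holds (\<lambda>v. (s v + u v) + a * (d v + c * u v)) I = holds (\<lambda>v. s v + a * (d v + c * u v)) I"
    using eventually_happens'[OF trivial_limit_at_top_linorder
        eventually_conj[OF eventually_ge_at_top eventually_holds_shift_eq[OF sep]]] by blast
  have "(\<lambda>v. s v + a * (d v + c * u v)) = prog_state 1 a (a - c) (2 * a) (c * a) 0"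
    and "(\<lambda>v. (s v + u v) + a * (d v + c * u v)) = prog_state 1 a (a - c) (2 * a) (c * a + 1) 0"
    by (auto simp: fun_eq_iff s_def d_def u_def prog_state_def algebra_simps split: var.split)
  moreover have "holds (prog_state 1 a (a - c) (2 * a) (c * a) 0) I"
    using \<open>c \<ge> 1\<close> \<open>a \<ge> c\<close> by (intro inductive_invariant_reachable[OF inv] reachable_loop1_state)
  moreover have "\<not> holds (prog_state 1 a (a - c) (2 * a) (c * a + 1) 0) I"
  proof
    assume "holds (prog_state 1 a (a - c) (2 * a) (c * a + 1) 0) I"
    moreover obtain t where "TR_Prog\<^sup>*\<^sup>* (prog_state 1 a (a - c) (2 * a) (c * a + 1) 0) t" "\<not> P_Prog t"
      by (rule loop1_state_reaches_violation[of c a]) (use \<open>c \<ge> 1\<close> \<open>a \<ge> c\<close> in auto)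
    ultimately have "holds t I" and "\<not> P_Prog t"
      using inductive_invariant_rtranclp[OF inv] by blast+
    then show False
      using inv by (simp add: inductive_invariant_Prog_def)
  qed
  ultimately show False using same by simp
qed

theorem mainTheorem2:
  shows "(\<forall>s. reachable_Prog s \<longrightarrow> P_Prog s) \<and> \<not> (\<exists>I :: var qflia. inductive_invariant_Prog I)"
  using reachable_Prog_safe no_inductive_invariant by blast

end
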